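(* Let $N\ge2$ and $r\in(0,1)$. The revenue guarantee of the second price auction with random reserve distributed according to $G_r(x)=(x/r)^{\frac1{N-1}}$, $x\in[0,r]$, is at least $$\int_{[0,r]}\frac{x^{\frac N{N-1}}}{r^{\frac1{N-1}}}\,dF(x)+r(1-F(r)).$$
   Context: A single indivisible good is sold to $N$ bidders with private values $v_i\in[0,1]$, each with the same marginal cdf $F$ on $[0,1]$ (point masses allowed). $\Pi(F)$ is the set of probability measures on $[0,1]^N$ with all one-dimensional marginals $F$. The revenue guarantee of a mechanism with payments $t$ (under truthful bidding) is $\inf_{\pi\in\Pi(F)}\int\sum_it_i\,d\pi$. The second price auction with random reserve distributed as a cdf $G$: a reserve $\rho\sim G$ is drawn independently of bids; a highest bidder (ties broken uniformly at random) wins if her bid is at least $\rho$ and pays $\max(\rho,\text{second highest bid})$; equivalently a unique highest bidder with value $v_{(1)}$ wins with probability $G(v_{(1)})$ and pays $v_{(1)}G(v_{(1)})-\int_{v_{(2)}}^{v_{(1)}}G(s)\,ds$, where $v_{(2)}$ is the second highest value. *)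

theory Defs
  imports "HOL-Probability.Probability"
begin

text \<open>Bid/value profiles of N bidders are functions on the index set {..<N}.\<close>

definition highest :: "nat \<Rightarrow> (nat \<Rightarrow> real) \<Rightarrow> real" where
  "highest N v = Max (v ` {..<N})"

text \<open>Second highest value (counted with multiplicity): removing one highest bidder
  and taking the maximum of the rest; equals the highest value in case of ties.\<close>
definition second_highest :: "nat \<Rightarrow> (nat \<Rightarrow> real) \<Rightarrow> real" where
  "second_highest N v = Min ((\<lambda>i. Max (v ` ({..<N} - {i}))) ` {..<N})"

text \<open>Expected payment of bidder i in the second price auction with random reserve
  with cdf G (reserve independent of bids, ties at the top broken uniformly at random).
  A highest bidder wins with probability G(v1) and pays in expectation
  v1 G(v1) - integral from v2 to v1 of G; with ties this is shared uniformly.\<close>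
definition spa_payment ::
  "(real \<Rightarrow> real) \<Rightarrow> nat \<Rightarrow> nat \<Rightarrow> (nat \<Rightarrow> real) \<Rightarrow> real" where
  "spa_payment G N i v =
     (if v i = highest N v
      then (1 / real (card {j\<in>{..<N}. v j = highest N v})) *
           (highest N v * G (highest N v) - integral {second_highest N v .. highest N v} G)
      else 0)"

definition spa_revenue :: "(real \<Rightarrow> real) \<Rightarrow> nat \<Rightarrow> (nat \<Rightarrow> real) \<Rightarrow> real" where
  "spa_revenue G N v = (\<Sum>i<N. spa_payment G N i v)"

definition profile_space :: "nat \<Rightarrow> (nat \<Rightarrow> real) measure" where
  "profile_space N = PiM {..<N} (\<lambda>_. borel)"

definition couplings :: "nat \<Rightarrow> real measure \<Rightarrow> (nat \<Rightarrow> real) measure set" where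
  "couplings N \<mu> = {\<pi>. prob_space \<pi> \<and> sets \<pi> = sets (profile_space N) \<and>
                        (\<forall>i<N. distr \<pi> borel (\<lambda>v. v i) = \<mu>)}"

definition revenue_guarantee ::
  "(real \<Rightarrow> real) \<Rightarrow> nat \<Rightarrow> real measure \<Rightarrow> real" where
  "revenue_guarantee G N \<mu> = (INF \<pi>\<in>couplings N \<mu>. \<integral>v. spa_revenue G N v \<partial>\<pi>)"

definition G_reserve :: "nat \<Rightarrow> real \<Rightarrow> real \<Rightarrow> real" where
  "G_reserve N r x = (if x < 0 then 0 else if x \<le> r then (x / r) powr (1 / (real N - 1)) else 1)"

end

theory Submission
  imports Defs
begin

(* Let psi(x) = min(x, r)^+ G(x). The reserve cdf G is chosen exactly so that
   A(x) = x G(x) - psi(x) / N is an antiderivative of G.  For a profile with highest value h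
   and second highest value s the revenue is therefore
     h G(h) - (A(h) - A(s)) = psi(h) / N + s G(s) - psi(s) / N >= psi(h) / N + (N - 1) psi(s) / N,
   and since psi is monotone and all bidders but one have value at most s, this dominates the
   average of psi over the N bidders.  Taking expectations under an arbitrary coupling, every
   bidder contributes the integral of psi against F, which is the claimed bound. *)

lemma highest_mem:
  assumes "0 < N"
  shows "highest N v \<in> v ` {..<N}"
  using assms unfolding highest_def by (intro Max_in) auto

lemma le_highest:
  assumes "i < N"
  shows "v i \<le> highest N v"
  using assms unfolding highest_def by (intro Max_ge) auto

lemma second_highest_eq_Max_without:
  assumes "2 \<le> N"
  obtains k where "k < N" "second_highest N v = Max (v ` ({..<N} - {k}))"
proof -
  have "second_highest N v \<in> (\<lambda>i. Max (v ` ({..<N} - {i}))) ` {..<N}"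
    unfolding second_highest_def using assms by (intro Min_in) (auto simp: lessThan_empty_iff)
  then show ?thesis using that by blast
qed

lemma second_highest_mem:
  assumes "2 \<le> N"
  shows "second_highest N v \<in> v ` {..<N}"
proof -
  obtain k where k: "k < N" "second_highest N v = Max (v ` ({..<N} - {k}))"
    using second_highest_eq_Max_without[OF assms] .
  have "(if k = 0 then 1 else 0) \<in> {..<N} - {k}"
    using assms by auto
  then have "Max (v ` ({..<N} - {k})) \<in> v ` ({..<N} - {k})"
    by (intro Max_in) auto
  then show ?thesis using k by auto
qed

lemma le_second_highest_except_one:
  assumes "2 \<le> N"
  obtains k where "k < N" "\<And>j. j < N \<Longrightarrow> j \<noteq> k \<Longrightarrow> v j \<le> second_highest N v"
proof -
  obtain k where "k < N" "second_highest N v = Max (v ` ({..<N} - {k}))"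
    using second_highest_eq_Max_without[OF assms] .
  then show ?thesis using that by auto
qed

lemma second_highest_le_highest:
  assumes "2 \<le> N"
  shows "second_highest N v \<le> highest N v"
proof -
  obtain i where "i < N" "second_highest N v = v i"
    using second_highest_mem[OF assms] by auto
  then show ?thesis by (simp add: le_highest)
qed

lemma spa_revenue_eq:
  assumes "0 < N"
  shows "spa_revenue G N v =
    highest N v * G (highest N v) - integral {second_highest N v .. highest N v} G"
    (is "_ = ?X")
proof -
  define T where "T = {j\<in>{..<N}. v j = highest N v}"
  have "T \<noteq> {}" "finite T"
    using highest_mem[OF assms, of v] by (auto simp: T_def)
  then have "real (card T) \<noteq> 0" by simp
  have "spa_revenue G N v = (\<Sum>i<N. if v i = highest N v then 1 / real (card T) * ?X else 0)"
    unfolding spa_revenue_def spa_payment_def T_def by simp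
  also have "\<dots> = (\<Sum>i\<in>T. 1 / real (card T) * ?X)"
    unfolding T_def by (rule sum.inter_filter[symmetric]) simp
  also have "\<dots> = ?X"
    using \<open>real (card T) \<noteq> 0\<close> by simp
  finally show ?thesis .
qed

lemma measurable_highest: "highest N \<in> borel_measurable (profile_space N)"
  unfolding highest_def[abs_def] profile_space_def
  by (intro borel_measurable_Max measurable_component_singleton) auto

lemma measurable_second_highest: "second_highest N \<in> borel_measurable (profile_space N)"
  unfolding second_highest_def[abs_def] profile_space_def
  by (intro borel_measurable_Min borel_measurable_Max measurable_component_singleton) auto

lemma couplings_nonempty:
  assumes "prob_space \<mu>" "sets \<mu> = sets borel"
  shows "couplings N \<mu> \<noteq> {}"
proof -
  define diag where "diag = (\<lambda>x::real. \<lambda>i\<in>{..<N}. x)"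
  have diag_meas: "diag \<in> measurable \<mu> (profile_space N)"
    unfolding diag_def profile_space_def measurable_cong_sets[OF assms(2) refl]
    by (intro measurable_restrict) simp
  define \<pi> where "\<pi> = distr \<mu> (profile_space N) diag"
  have "distr \<pi> borel (\<lambda>v. v i) = \<mu>" if "i < N" for i
  proof -
    have "(\<lambda>v. v i) \<in> borel_measurable (profile_space N)"
      unfolding profile_space_def using that by (intro measurable_component_singleton) simp
    then have "distr \<pi> borel (\<lambda>v. v i) = distr \<mu> borel ((\<lambda>v. v i) \<circ> diag)"
      unfolding \<pi>_def using diag_meas by (rule distr_distr)
    also have "(\<lambda>v. v i) \<circ> diag = (\<lambda>x. x)"
      using that by (auto simp: diag_def)
    finally show ?thesis
      using distr_id2[OF assms(2)[symmetric]] by simp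
  qed
  moreover have "prob_space \<pi>"
    unfolding \<pi>_def using diag_meas by (intro prob_space.prob_space_distr assms(1))
  ultimately have "\<pi> \<in> couplings N \<mu>"
    unfolding couplings_def by (simp add: \<pi>_def)
  then show ?thesis by blast
qed

lemma
  assumes "\<pi> \<in> couplings N \<mu>" "i < N"
  shows measurable_coupling_coordinate: "(\<lambda>v. v i) \<in> borel_measurable \<pi>"
    and distr_coupling_coordinate: "distr \<pi> borel (\<lambda>v. v i) = \<mu>"
  using assms unfolding couplings_def profile_space_def
  by (auto simp: measurable_cong_sets[OF _ refl, of \<pi> "PiM {..<N} (\<lambda>_. borel)"])

lemma AE_coupling_coordinate:
  assumes \<pi>: "\<pi> \<in> couplings N \<mu>" "i < N" and "A \<in> sets borel" "AE x in \<mu>. x \<in> A"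
  shows "AE v in \<pi>. v i \<in> A"
proof -
  have "AE x in distr \<pi> borel (\<lambda>v. v i). x \<in> A"
    using assms(4) by (simp only: distr_coupling_coordinate[OF \<pi>])
  then show ?thesis
    using assms(3) by (subst (asm) AE_distr_iff[OF measurable_coupling_coordinate[OF \<pi>]]) auto
qed

lemma
  fixes f :: "real \<Rightarrow> real"
  assumes \<pi>: "\<pi> \<in> couplings N \<mu>" "i < N" and f: "f \<in> borel_measurable borel"
  shows integrable_coupling_coordinate: "integrable \<pi> (\<lambda>v. f (v i)) \<longleftrightarrow> integrable \<mu> f"
    and integral_coupling_coordinate: "(\<integral>v. f (v i) \<partial>\<pi>) = (\<integral>x. f x \<partial>\<mu>)"
  using integrable_distr_eq[OF measurable_coupling_coordinate[OF \<pi>] f]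
    integral_distr[OF measurable_coupling_coordinate[OF \<pi>] f]
  by (simp_all add: distr_coupling_coordinate[OF \<pi>])

lemma integrable_continuous_AE_unit_interval:
  fixes f :: "real \<Rightarrow> real"
  assumes "prob_space \<mu>" "sets \<mu> = sets borel" "AE x in \<mu>. x \<in> {0..1}"
    and "continuous_on UNIV f"
  shows "integrable \<mu> f"
proof -
  obtain B where B: "\<And>x. x \<in> {0..1} \<Longrightarrow> \<bar>f x\<bar> \<le> B"
    using continuous_on_compact_bound[OF compact_Icc continuous_on_subset[OF assms(4)]]
    by (metis real_norm_def subset_UNIV)
  have "AE x in \<mu>. norm (f x) \<le> B"
    using assms(3) by eventually_elim (simp add: B)
  moreover have "f \<in> borel_measurable \<mu>"
    using borel_measurable_continuous_onI[OF assms(4)] measurable_cong_sets[OF assms(2) refl]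
    by blast
  ultimately show ?thesis
    using finite_measure.integrable_const_bound[OF prob_space.finite_measure[OF assms(1)]] by blast
qed

locale spa_certificate =
  fixes N :: nat and G \<psi> :: "real \<Rightarrow> real"
  assumes two_le_N: "2 \<le> N"
    and continuous_G: "continuous_on UNIV G"
    and continuous_psi: "continuous_on UNIV \<psi>"
    and mono_psi: "mono \<psi>"
    and psi_le: "\<And>x. \<psi> x \<le> x * G x"
    and G_has_integral: "\<And>s h. s \<le> h \<Longrightarrow>
      (G has_integral (h * G h - \<psi> h / N) - (s * G s - \<psi> s / N)) {s..h}"
begin

lemma spa_revenue_closed_form:
  "spa_revenue G N v = \<psi> (highest N v) / N
     + (second_highest N v * G (second_highest N v) - \<psi> (second_highest N v) / N)"
  using spa_revenue_eq[of N G v] two_le_N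
    integral_unique[OF G_has_integral[OF second_highest_le_highest[OF two_le_N]]]
  by simp

lemma spa_revenue_ge_mean: "(\<Sum>i<N. \<psi> (v i)) / N \<le> spa_revenue G N v"
proof -
  define h s where "h = highest N v" and "s = second_highest N v"
  obtain k where k: "k < N" "\<And>j. j < N \<Longrightarrow> j \<noteq> k \<Longrightarrow> v j \<le> s"
    using le_second_highest_except_one[OF two_le_N] unfolding s_def by metis
  have "(\<Sum>i<N. \<psi> (v i)) = \<psi> (v k) + (\<Sum>i\<in>{..<N}-{k}. \<psi> (v i))"
    using k(1) by (simp add: sum.remove)
  also have "\<dots> \<le> \<psi> h + (\<Sum>i\<in>{..<N}-{k}. \<psi> s)"
    using k le_highest[of k N v] unfolding h_def
    by (intro add_mono sum_mono monoD[OF mono_psi]) auto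
  also have "\<dots> = \<psi> h + (real N - 1) * \<psi> s"
    using k(1) two_le_N by (simp add: of_nat_diff)
  finally have "(\<Sum>i<N. \<psi> (v i)) / N \<le> (\<psi> h + (real N - 1) * \<psi> s) / N"
    by (simp add: divide_right_mono)
  also have "\<dots> = \<psi> h / N + (\<psi> s - \<psi> s / N)"
    using two_le_N by (simp add: field_simps)
  also have "\<dots> \<le> spa_revenue G N v"
    using psi_le[of s] by (simp add: spa_revenue_closed_form h_def s_def)
  finally show ?thesis .
qed

lemma measurable_spa_revenue: "spa_revenue G N \<in> borel_measurable (profile_space N)"
proof -
  have "continuous_on UNIV (\<lambda>x. x * G x - \<psi> x / N)"
    using two_le_N by (intro continuous_intros continuous_G continuous_psi) auto
  then have "(\<lambda>v. \<psi> (highest N v) / N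
      + (second_highest N v * G (second_highest N v) - \<psi> (second_highest N v) / N))
      \<in> borel_measurable (profile_space N)"
    by (intro borel_measurable_add borel_measurable_divide borel_measurable_const
        borel_measurable_continuous_on[OF continuous_psi measurable_highest]
        borel_measurable_continuous_on[OF _ measurable_second_highest])
  then show ?thesis
    by (simp add: spa_revenue_closed_form[abs_def])
qed

lemma spa_revenue_bounded:
  obtains B where "\<And>v. (\<forall>i<N. v i \<in> {0..1}) \<Longrightarrow> \<bar>spa_revenue G N v\<bar> \<le> B"
proof -
  obtain B1 where B1: "\<And>x. x \<in> {0..1} \<Longrightarrow> \<bar>\<psi> x\<bar> \<le> B1"
    using continuous_on_compact_bound[OF compact_Icc continuous_on_subset[OF continuous_psi]]
    by (metis real_norm_def subset_UNIV)
  obtain B2 where B2: "\<And>x. x \<in> {0..1} \<Longrightarrow> \<bar>x * G x\<bar> \<le> B2"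
  proof -
    have "continuous_on {0..1} (\<lambda>x. x * G x)"
      using continuous_on_subset[OF continuous_G] by (intro continuous_intros) auto
    then show ?thesis
      using continuous_on_compact_bound[OF compact_Icc] that by (metis real_norm_def)
  qed
  have "\<bar>spa_revenue G N v\<bar> \<le> 2 * B1 + B2" if "\<forall>i<N. v i \<in> {0..1}" for v
  proof -
    define h s where "h = highest N v" and "s = second_highest N v"
    have "h \<in> {0..1}" "s \<in> {0..1}"
      using that highest_mem[of N v] second_highest_mem[OF two_le_N, of v] two_le_N
      by (auto simp: h_def s_def)
    moreover have shrink: "\<bar>y / N\<bar> \<le> \<bar>y\<bar>" for y :: real
      using two_le_N by (simp add: divide_le_eq abs_divide mult_le_cancel_left1)
    ultimately show ?thesis
      using B1[of h] B1[of s] B2[of s] shrink[of "\<psi> h"] shrink[of "\<psi> s"]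
      unfolding spa_revenue_closed_form h_def[symmetric] s_def[symmetric] by linarith
  qed
  then show ?thesis using that by blast
qed

lemma integrable_spa_revenue:
  assumes \<pi>: "\<pi> \<in> couplings N \<mu>" and unit: "AE x in \<mu>. x \<in> {0..1}"
  shows "integrable \<pi> (spa_revenue G N)"
proof -
  interpret \<pi>: prob_space \<pi> using \<pi> by (simp add: couplings_def)
  obtain C where C: "\<And>v. (\<forall>i<N. v i \<in> {0..1}) \<Longrightarrow> \<bar>spa_revenue G N v\<bar> \<le> C"
    using spa_revenue_bounded by blast
  have "AE v in \<pi>. \<forall>i\<in>{..<N}. v i \<in> {0..1}"
    using AE_coupling_coordinate[OF \<pi> _ _ unit] by (intro AE_finite_allI) auto
  then have "AE v in \<pi>. norm (spa_revenue G N v) \<le> C"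
    by eventually_elim (simp add: C)
  moreover have "sets \<pi> = sets (profile_space N)"
    using \<pi> by (simp add: couplings_def)
  then have "spa_revenue G N \<in> borel_measurable \<pi>"
    using measurable_spa_revenue measurable_cong_sets by blast
  ultimately show ?thesis
    by (rule \<pi>.integrable_const_bound)
qed

lemma expected_spa_revenue_ge:
  assumes \<mu>: "prob_space \<mu>" "sets \<mu> = sets borel" "AE x in \<mu>. x \<in> {0..1}"
    and \<pi>: "\<pi> \<in> couplings N \<mu>"
  shows "(\<integral>x. \<psi> x \<partial>\<mu>) \<le> (\<integral>v. spa_revenue G N v \<partial>\<pi>)"
proof -
  have psi_meas: "\<psi> \<in> borel_measurable borel"
    by (rule borel_measurable_continuous_onI[OF continuous_psi])
  have "integrable \<mu> \<psi>"
    by (rule integrable_continuous_AE_unit_interval[OF \<mu> continuous_psi])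
  then have coord: "integrable \<pi> (\<lambda>v. \<psi> (v i))" "(\<integral>v. \<psi> (v i) \<partial>\<pi>) = (\<integral>x. \<psi> x \<partial>\<mu>)"
    if "i < N" for i
    using integrable_coupling_coordinate[OF \<pi> that psi_meas]
      integral_coupling_coordinate[OF \<pi> that psi_meas] by simp_all
  have "(\<integral>x. \<psi> x \<partial>\<mu>) = (\<Sum>i<N. \<integral>v. \<psi> (v i) \<partial>\<pi>) / N"
    using coord two_le_N by simp
  also have "\<dots> = (\<integral>v. (\<Sum>i<N. \<psi> (v i)) / N \<partial>\<pi>)"
    using coord by (simp add: integral_sum)
  also have "\<dots> \<le> (\<integral>v. spa_revenue G N v \<partial>\<pi>)"
    using coord integrable_spa_revenue[OF \<pi> \<mu>(3)] spa_revenue_ge_mean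
    by (intro integral_mono integrable_divide_zero integrable_sum) auto
  finally show ?thesis .
qed

lemma revenue_guarantee_ge:
  assumes "prob_space \<mu>" "sets \<mu> = sets borel" "measure \<mu> {0..1} = 1"
  shows "(\<integral>x. \<psi> x \<partial>\<mu>) \<le> revenue_guarantee G N \<mu>"
proof -
  have "AE x in \<mu>. x \<in> {0..1}"
    using assms by (intro prob_space.AE_prob_1) simp_all
  then show ?thesis
    unfolding revenue_guarantee_def
    using couplings_nonempty[OF assms(1,2)] expected_spa_revenue_ge[OF assms(1,2)]
    by (intro cInf_greatest) auto
qed

end

lemma has_real_derivative_antiderivative_powr:
  assumes "0 < x" "0 < c" "1 + a \<noteq> 0"
  shows "((\<lambda>y. y * (y / c) powr a / (1 + a)) has_real_derivative (x / c) powr a) (at x)"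
proof -
  have "a * (x / c) powr (a - 1) * x / c = a * (x / c) powr a"
    using assms by (simp add: powr_diff)
  then have "((\<lambda>y. y * (y / c) powr a) has_real_derivative (1 + a) * (x / c) powr a) (at x)"
    using assms by (intro derivative_eq_intros refl) (auto simp: distrib_right)
  from DERIV_cdivide[OF this, of "1 + a"] show ?thesis
    using assms by simp
qed

lemma G_reserve_eq_clamped:
  assumes "0 < r"
  shows "G_reserve N r x = (max 0 (min x r) / r) powr (1 / (real N - 1))"
  using assms by (auto simp: G_reserve_def)

lemma continuous_on_G_reserve:
  assumes "0 < r" "2 \<le> N"
  shows "continuous_on UNIV (G_reserve N r)"
proof -
  have "continuous_on UNIV (\<lambda>x. (max 0 (min x r) / r) powr (1 / (real N - 1)))"
    using assms by (intro continuous_on_powr' continuous_intros) auto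
  then show ?thesis
    using G_reserve_eq_clamped[OF assms(1)] by presburger
qed

lemma G_reserve_nonneg: "0 \<le> G_reserve N r x"
  by (simp add: G_reserve_def)

lemma G_reserve_le_one:
  assumes "0 < r" "2 \<le> N"
  shows "G_reserve N r x \<le> 1"
  unfolding G_reserve_eq_clamped[OF assms(1)]
  using assms by (intro powr_le1) auto

lemma mono_G_reserve:
  assumes "0 < r" "2 \<le> N"
  shows "mono (G_reserve N r)"
proof
  fix x y :: real assume "x \<le> y"
  then have "max 0 (min x r) / r \<le> max 0 (min y r) / r"
    using assms by (intro divide_right_mono) auto
  then show "G_reserve N r x \<le> G_reserve N r y"
    unfolding G_reserve_eq_clamped[OF assms(1)]
    using assms by (intro powr_mono2) auto
qed

definition guarantee_integrand :: "nat \<Rightarrow> real \<Rightarrow> real \<Rightarrow> real" where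
  "guarantee_integrand N r x = max 0 (min x r) * G_reserve N r x"

lemma guarantee_integrand_le: "guarantee_integrand N r x \<le> x * G_reserve N r x"
  unfolding guarantee_integrand_def
  by (cases "x < 0") (auto simp: G_reserve_def intro: mult_right_mono)

lemma mono_guarantee_integrand:
  assumes "0 < r" "2 \<le> N"
  shows "mono (guarantee_integrand N r)"
  unfolding guarantee_integrand_def
  using monoD[OF mono_G_reserve[OF assms]]
  by (intro monoI mult_mono) (auto simp: G_reserve_nonneg)

lemma continuous_on_guarantee_integrand:
  assumes "0 < r" "2 \<le> N"
  shows "continuous_on UNIV (guarantee_integrand N r)"
  unfolding guarantee_integrand_def[abs_def]
  by (intro continuous_intros continuous_on_G_reserve[OF assms])

lemma has_real_derivative_G_reserve_antiderivative:
  assumes r: "0 < r" and N: "2 \<le> N" and x: "x \<noteq> 0" "x \<noteq> r"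
  shows "((\<lambda>y. y * G_reserve N r y - guarantee_integrand N r y / N)
           has_real_derivative G_reserve N r x) (at x)"
    (is "(?A has_real_derivative _) _")
proof -
  define a where "a = 1 / (real N - 1)"
  consider "x < 0" | "0 < x" "x < r" | "r < x" using x by linarith
  then show ?thesis
  proof cases
    case 1
    then have "((\<lambda>_. 0) has_real_derivative G_reserve N r x) (at x)"
      by (simp add: G_reserve_def)
    then show ?thesis
    proof (rule has_field_derivative_transform_within_open[where S = "{..<0}"])
      show "0 = ?A y" if "y \<in> {..<0}" for y
        using that by (simp add: G_reserve_def guarantee_integrand_def)
    qed (use 1 in auto)
  next
    case 2
    have "0 < a"
      using N by (simp add: a_def)
    then have "1 + a \<noteq> 0"
      by linarith
    moreover have "(x / r) powr a = G_reserve N r x"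
      using 2 by (simp add: G_reserve_def a_def)
    ultimately have "((\<lambda>y. y * (y / r) powr a / (1 + a)) has_real_derivative G_reserve N r x) (at x)"
      using has_real_derivative_antiderivative_powr[OF \<open>0 < x\<close> r] by metis
    then show ?thesis
    proof (rule has_field_derivative_transform_within_open[where S = "{0<..<r}"])
      show "y * (y / r) powr a / (1 + a) = ?A y" if "y \<in> {0<..<r}" for y
        using that N by (simp add: G_reserve_def guarantee_integrand_def a_def field_simps)
    qed (use 2 in auto)
  next
    case 3
    then have "((\<lambda>y. y - r / N) has_real_derivative G_reserve N r x) (at x)"
      using r by (auto intro!: derivative_eq_intros simp: G_reserve_def)
    then show ?thesis
    proof (rule has_field_derivative_transform_within_open[where S = "{r<..}"])
      show "y - r / N = ?A y" if "y \<in> {r<..}" for y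
        using that r by (simp add: G_reserve_def guarantee_integrand_def)
    qed (use 3 in auto)
  qed
qed

lemma G_reserve_has_integral:
  assumes r: "0 < r" and N: "2 \<le> N" and "s \<le> h"
  shows "(G_reserve N r has_integral
     (h * G_reserve N r h - guarantee_integrand N r h / N)
       - (s * G_reserve N r s - guarantee_integrand N r s / N)) {s..h}"
proof (rule fundamental_theorem_of_calculus_interior_strong[where S = "{0, r}"])
  show "continuous_on {s..h} (\<lambda>y. y * G_reserve N r y - guarantee_integrand N r y / N)"
    using N by (intro continuous_intros continuous_on_subset[OF continuous_on_G_reserve[OF r N]]
        continuous_on_subset[OF continuous_on_guarantee_integrand[OF r N]]) auto
qed (use assms has_real_derivative_G_reserve_antiderivative
      in \<open>auto simp: has_real_derivative_iff_has_vector_derivative\<close>)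

lemma spa_certificate_G_reserve:
  assumes "0 < r" "2 \<le> N"
  shows "spa_certificate N (G_reserve N r) (guarantee_integrand N r)"
  using assms
  by unfold_locales (simp_all add: continuous_on_G_reserve continuous_on_guarantee_integrand
      mono_guarantee_integrand guarantee_integrand_le G_reserve_has_integral)

lemma guarantee_integrand_eq:
  assumes r: "0 < r" and N: "2 \<le> N"
  shows "guarantee_integrand N r x
    = indicator {0..r} x * (x powr (real N / (real N - 1)) / r powr (1 / (real N - 1)))
      + r * indicator {r<..} x"
proof -
  define a where "a = 1 / (real N - 1)"
  have "real N / (real N - 1) = 1 + a"
    using N by (simp add: a_def field_simps)
  moreover have "x * (x / r) powr a = x powr (1 + a) / r powr a" if "0 \<le> x"
  proof (cases "x = 0")
    case True
    then show ?thesis using N by (simp add: a_def)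
  next
    case False
    then show ?thesis using that r by (simp add: powr_divide powr_add)
  qed
  ultimately show ?thesis
    using r by (auto simp: guarantee_integrand_def G_reserve_def indicator_def a_def)
qed

lemma integral_guarantee_integrand:
  assumes r: "0 < r" and N: "2 \<le> N" and \<mu>: "prob_space \<mu>" "sets \<mu> = sets borel"
  shows "(\<integral>x\<in>{0..r}. x powr (real N / (real N - 1)) / r powr (1 / (real N - 1)) \<partial>\<mu>)
           + r * (1 - measure \<mu> {..r})
         = (\<integral>x. guarantee_integrand N r x \<partial>\<mu>)"
proof -
  interpret prob_space \<mu> by fact
  have space: "space \<mu> = UNIV"
    using sets_eq_imp_space_eq[OF \<mu>(2)] by simp
  have "guarantee_integrand N r \<in> borel_measurable \<mu>"
    using borel_measurable_continuous_onI[OF continuous_on_guarantee_integrand[OF r N]]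
      measurable_cong_sets[OF \<mu>(2) refl] by blast
  moreover have "norm (guarantee_integrand N r x) \<le> r" for x
  proof -
    have "max 0 (min x r) * G_reserve N r x \<le> max 0 (min x r)"
      using G_reserve_le_one[OF r N, of x] by (intro mult_left_le) auto
    then show ?thesis
      using G_reserve_nonneg[of N r x] r by (auto simp: guarantee_integrand_def)
  qed
  ultimately have "integrable \<mu> (guarantee_integrand N r)"
    by (intro integrable_const_bound[where B = r]) auto
  moreover have "integrable \<mu> (\<lambda>x. r * indicator {r<..} x)"
    using \<mu>(2) by (intro integrable_mult_right integrable_real_indicator) (auto simp: emeasure_eq_measure)
  moreover have "(\<integral>x\<in>{0..r}. x powr (real N / (real N - 1)) / r powr (1 / (real N - 1)) \<partial>\<mu>)
      = (\<integral>x. guarantee_integrand N r x - r * indicator {r<..} x \<partial>\<mu>)"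
    unfolding set_lebesgue_integral_def
    by (intro Bochner_Integration.integral_cong) (auto simp: guarantee_integrand_eq[OF r N])
  ultimately have "(\<integral>x\<in>{0..r}. x powr (real N / (real N - 1)) / r powr (1 / (real N - 1)) \<partial>\<mu>)
      = (\<integral>x. guarantee_integrand N r x \<partial>\<mu>) - r * measure \<mu> {r<..}"
    by (simp add: space)
  moreover have "measure \<mu> {r<..} = 1 - measure \<mu> {..r}"
    using prob_compl[of "{..r}"] \<mu>(2) by (simp add: space Compl_eq_Diff_UNIV[symmetric])
  ultimately show ?thesis by simp
qed

theorem lemma1:
  fixes N :: nat and r :: real and \<mu> :: "real measure"
  assumes "N \<ge> 2" and "0 < r" and "r < 1"
    and "prob_space \<mu>" and "sets \<mu> = sets borel" and "measure \<mu> {0..1} = 1"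
  shows "(\<integral>x\<in>{0..r}. x powr (real N / (real N - 1)) / r powr (1 / (real N - 1)) \<partial>\<mu>)
           + r * (1 - measure \<mu> {..r})
         \<le> revenue_guarantee (G_reserve N r) N \<mu>"
proof -
  have "(\<integral>x\<in>{0..r}. x powr (real N / (real N - 1)) / r powr (1 / (real N - 1)) \<partial>\<mu>)
           + r * (1 - measure \<mu> {..r})
         = (\<integral>x. guarantee_integrand N r x \<partial>\<mu>)"
    using integral_guarantee_integrand assms by blast
  also have "\<dots> \<le> revenue_guarantee (G_reserve N r) N \<mu>"
    using spa_certificate.revenue_guarantee_ge[OF spa_certificate_G_reserve] assms by blast
  finally show ?thesis .
qed

end
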